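(* Let $H$ be a real Hilbert space, $C\subseteq H$ nonempty, $\varphi:[0,\infty)\to[0,\infty)$ an increasing function vanishing only at $0$, and $A:H\to2^H$ a maximally monotone operator which is uniformly monotone on $C$ with modulus $\varphi$. Let $\gamma>0$ be such that $J_{\gamma A}(C)\subseteq C$. Then $J_{\gamma A}$ is uniformly firmly nonexpansive on $C$ with modulus $\gamma\varphi$.
   Context: $J_{\gamma A}:=(id_H+\gamma A)^{-1}$ (single-valued on $H$). $A$ is uniformly monotone on $C$ with modulus $\varphi$ if for all $x,y\in C$ and $u\in A(x)$, $v\in A(y)$: $\langle x-y,u-v\rangle\ge\varphi(\|x-y\|)$. A map $T$ is uniformly firmly nonexpansive on $C$ with modulus $\phi$ if $T(C)\subseteq C$ and for all $x,y\in C$, $t\in[0,1]$: $\|Tx-Ty\|^2\le\|((1-t)x+tTx)-((1-t)y+tTy)\|^2-2(1-t)\phi(\|Tx-Ty\|)$. *)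

theory Defs
  imports "HOL-Analysis.Analysis"
begin

definition monotone_op :: "('a::real_inner \<Rightarrow> 'a set) \<Rightarrow> bool" where
  "monotone_op A \<longleftrightarrow>
     (\<forall>x y u v. u \<in> A x \<longrightarrow> v \<in> A y \<longrightarrow> inner (x - y) (u - v) \<ge> 0)"

definition maximally_monotone :: "('a::real_inner \<Rightarrow> 'a set) \<Rightarrow> bool" where
  "maximally_monotone A \<longleftrightarrow> monotone_op A \<and>
     (\<forall>B. monotone_op B \<and> (\<forall>x. A x \<subseteq> B x) \<longrightarrow> B = A)"

definition uniformly_monotone_on ::
  "'a set \<Rightarrow> (real \<Rightarrow> real) \<Rightarrow> ('a::real_inner \<Rightarrow> 'a set) \<Rightarrow> bool" where
  "uniformly_monotone_on C \<phi> A \<longleftrightarrow>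
     (\<forall>x\<in>C. \<forall>y\<in>C. \<forall>u\<in>A x. \<forall>v\<in>A y. inner (x - y) (u - v) \<ge> \<phi> (norm (x - y)))"

text \<open>Resolvent J_{\<gamma>A} = (id + \<gamma>A)^{-1}: J x is the (unique, for maximally monotone A)
  point p with x \<in> p + \<gamma> A p.\<close>
definition resolvent :: "real \<Rightarrow> ('a::real_inner \<Rightarrow> 'a set) \<Rightarrow> 'a \<Rightarrow> 'a" where
  "resolvent \<gamma> A x = (THE p. \<exists>u\<in>A p. x = p + \<gamma> *\<^sub>R u)"

definition uniformly_firmly_nonexpansive_on ::
  "'a set \<Rightarrow> (real \<Rightarrow> real) \<Rightarrow> ('a::real_inner \<Rightarrow> 'a) \<Rightarrow> bool" where
  "uniformly_firmly_nonexpansive_on C \<phi> T \<longleftrightarrow> T ` C \<subseteq> C \<and>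
     (\<forall>x\<in>C. \<forall>y\<in>C. \<forall>t\<in>{0..1::real}.
        (norm (T x - T y))\<^sup>2 \<le>
          (norm (((1 - t) *\<^sub>R x + t *\<^sub>R T x) - ((1 - t) *\<^sub>R y + t *\<^sub>R T y)))\<^sup>2
          - 2 * (1 - t) * \<phi> (norm (T x - T y)))"

end

theory Submission
  imports Defs
begin

(* Write J for the resolvent. Once J is known to be defined everywhere, x = J x + gamma u with
   u in A (J x), so uniform monotonicity at J x and J y gives
   <J x - J y, (x - y) - (J x - J y)> >= gamma phi (norm (J x - J y)); expanding the square of
   the convex combination turns this into the defining inequality.

   That J is defined everywhere is Minty's theorem, which follows from the Kirszbraun-Valentine
   extension property of Hilbert spaces: the pairs (x - gamma u, x + gamma u) with u in A x form
   the graph of a nonexpansive map, and the midpoint of z and an extension value at z is the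
   preimage of z under id + gamma A. The extension exists for finitely many points because a
   concave function attains its maximum on a convex hull, and in general because closed balls
   with the finite intersection property meet, by a minimal-norm argument. *)

section \<open>Extension of nonexpansive maps in Hilbert space\<close>

lemma sum_sum_power2_norm_diff:
  fixes x :: "'i \<Rightarrow> 'a::real_inner"
  assumes "finite I" and "sum u I = 1"
  shows "(\<Sum>i\<in>I. \<Sum>j\<in>I. u i * u j * (norm (x i - x j))\<^sup>2)
     = 2 * (\<Sum>i\<in>I. u i * (norm (x i))\<^sup>2) - 2 * (norm (\<Sum>i\<in>I. u i *\<^sub>R x i))\<^sup>2"
proof -
  have expand: "u i * u j * (norm (x i - x j))\<^sup>2
      = u j * (u i * (norm (x i))\<^sup>2) + u i * (u j * (norm (x j))\<^sup>2) - 2 * inner (u i *\<^sub>R x i) (u j *\<^sub>R x j)"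
    for i j
    by (simp add: power2_norm_eq_inner inner_diff_left inner_diff_right inner_commute algebra_simps)
  have "(\<Sum>i\<in>I. \<Sum>j\<in>I. inner (u i *\<^sub>R x i) (u j *\<^sub>R x j)) = (norm (\<Sum>i\<in>I. u i *\<^sub>R x i))\<^sup>2"
    unfolding power2_norm_eq_inner inner_sum_left by (simp only: inner_sum_right)
  then show ?thesis
    unfolding expand
    by (simp add: sum_subtractf sum.distrib sum_distrib_left[symmetric] sum_distrib_right[symmetric] assms)
qed

lemma le_zero_if_le_quadratic:
  fixes d c :: real
  assumes "\<And>e. 0 < e \<Longrightarrow> e \<le> 1 \<Longrightarrow> e * d \<le> e\<^sup>2 * c"
  shows "d \<le> 0"
proof (rule ccontr)
  assume "\<not> d \<le> 0"
  define e where "e = min 1 (d / (2 * (\<bar>c\<bar> + 1)))"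
  have "0 < e" "e \<le> 1" using \<open>\<not> d \<le> 0\<close> by (auto simp: e_def)
  then have "d \<le> e * c" using assms[of e] by (simp add: power2_eq_square)
  also have "\<dots> \<le> e * (\<bar>c\<bar> + 1)" using \<open>0 < e\<close> by (intro mult_left_mono) auto
  also have "\<dots> \<le> d / 2"
  proof -
    have "e \<le> d / (2 * (\<bar>c\<bar> + 1))" by (simp add: e_def)
    then show ?thesis by (simp add: pos_le_divide_eq mult_ac add_nonneg_pos)
  qed
  finally show False using \<open>\<not> d \<le> 0\<close> by simp
qed

lemma affine_minus_power2_norm_on_segment:
  fixes x y :: "'a::real_inner"
  shows "(1 - e) * s + e * r - (norm ((1 - e) *\<^sub>R x + e *\<^sub>R y))\<^sup>2
     = (s - (norm x)\<^sup>2) + e * ((r - (norm y)\<^sup>2) + (norm (y - x))\<^sup>2 - (s - (norm x)\<^sup>2))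
       - e\<^sup>2 * (norm (y - x))\<^sup>2"
  unfolding power2_norm_eq_inner
  by (simp add: inner_add_left inner_add_right inner_diff_left inner_diff_right inner_commute
      power2_eq_square algebra_simps)

lemma convex_hull_weight_le_power2_norm:
  fixes S :: "('a::real_inner \<times> 'a \<times> real) set"
  assumes "finite S" and "y \<in> convex hull S"
    and expand: "\<And>q r. q \<in> S \<Longrightarrow> r \<in> S \<Longrightarrow> norm (fst q - fst r) \<le> norm (fst (snd q) - fst (snd r))"
    and weight: "\<And>q. q \<in> S \<Longrightarrow> snd (snd q) = (norm (fst q))\<^sup>2 - (norm (z - fst (snd q)))\<^sup>2"
  shows "snd (snd y) \<le> (norm (fst y))\<^sup>2"
proof -
  obtain u where u_nonneg: "\<forall>q\<in>S. 0 \<le> u q" and u_sum: "sum u S = 1"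
    and y_eq: "(\<Sum>q\<in>S. u q *\<^sub>R q) = y"
    using \<open>y \<in> convex hull S\<close> unfolding convex_hull_finite[OF \<open>finite S\<close>] by blast
  define c where "c q = fst (snd q) - z" for q :: "'a \<times> 'a \<times> real"
  have c_expand: "norm (fst q - fst r) \<le> norm (c q - c r)" if "q \<in> S" "r \<in> S" for q r
    using expand[OF that] by (simp add: c_def)
  have fst_y: "fst y = (\<Sum>q\<in>S. u q *\<^sub>R fst q)"
    unfolding y_eq[symmetric] by (simp add: fst_sum)
  have "snd (snd y) = (\<Sum>q\<in>S. u q * snd (snd q))"
    unfolding y_eq[symmetric] by (simp add: snd_sum)
  also have "\<dots> = (\<Sum>q\<in>S. u q * (norm (fst q))\<^sup>2 - u q * (norm (c q))\<^sup>2)"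
    using weight by (intro sum.cong) (simp_all add: c_def right_diff_distrib norm_minus_commute)
  also have "\<dots> = (\<Sum>q\<in>S. u q * (norm (fst q))\<^sup>2) - (\<Sum>q\<in>S. u q * (norm (c q))\<^sup>2)"
    by (rule sum_subtractf)
  finally have "2 * (snd (snd y) - (norm (fst y))\<^sup>2)
      = (\<Sum>q\<in>S. \<Sum>r\<in>S. u q * u r * (norm (fst q - fst r))\<^sup>2) - 2 * (\<Sum>q\<in>S. u q * (norm (c q))\<^sup>2)"
    unfolding fst_y sum_sum_power2_norm_diff[OF \<open>finite S\<close> u_sum] by simp
  also have "\<dots> \<le> (\<Sum>q\<in>S. \<Sum>r\<in>S. u q * u r * (norm (c q - c r))\<^sup>2) - 2 * (\<Sum>q\<in>S. u q * (norm (c q))\<^sup>2)"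
  proof (intro diff_right_mono sum_mono mult_left_mono power_mono)
    fix q r assume "q \<in> S" "r \<in> S"
    then show "norm (fst q - fst r) \<le> norm (c q - c r)" by (rule c_expand)
    show "0 \<le> u q * u r" using u_nonneg \<open>q \<in> S\<close> \<open>r \<in> S\<close> by simp
  qed simp
  also have "\<dots> = - 2 * (norm (\<Sum>q\<in>S. u q *\<^sub>R c q))\<^sup>2"
    unfolding sum_sum_power2_norm_diff[OF \<open>finite S\<close> u_sum] by simp
  finally show ?thesis by (smt (verit) zero_le_power2)
qed

(* Psi is concave and, by the previous lemma, nonpositive on the convex hull of the points P i;
   at a maximiser y its one-sided derivative towards P i is nonpositive, and this derivative is
   |a i - fst y|^2 - |z - b i|^2 - Psi y. *)
lemma nonexpansive_extension_finite:
  fixes a b :: "'i \<Rightarrow> 'a::real_inner"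
  assumes "finite I"
    and expand: "\<And>i j. i \<in> I \<Longrightarrow> j \<in> I \<Longrightarrow> norm (a i - a j) \<le> norm (b i - b j)"
  shows "\<exists>t. \<forall>i\<in>I. norm (t - a i) \<le> norm (z - b i)"
proof (cases "I = {}")
  case True
  then show ?thesis by simp
next
  case False
  define P where "P i = (a i, b i, (norm (a i))\<^sup>2 - (norm (z - b i))\<^sup>2)" for i
  define \<Psi> where "\<Psi> y = snd (snd y) - (norm (fst y))\<^sup>2" for y :: "'a \<times> 'a \<times> real"
  define K where "K = convex hull (P ` I)"
  have "compact K" unfolding K_def using \<open>finite I\<close> by (intro finite_imp_compact_convex_hull) simp
  moreover have "K \<noteq> {}" using False by (simp add: K_def)
  moreover have "continuous_on K \<Psi>" unfolding \<Psi>_def by (intro continuous_intros)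
  ultimately obtain y where "y \<in> K" and y_max: "\<And>y'. y' \<in> K \<Longrightarrow> \<Psi> y' \<le> \<Psi> y"
    using continuous_attains_sup by metis
  have "snd (snd y) \<le> (norm (fst y))\<^sup>2"
  proof (rule convex_hull_weight_le_power2_norm)
    show "finite (P ` I)" using \<open>finite I\<close> by simp
    show "y \<in> convex hull (P ` I)" using \<open>y \<in> K\<close> by (simp add: K_def)
    show "norm (fst q - fst r) \<le> norm (fst (snd q) - fst (snd r))" if "q \<in> P ` I" "r \<in> P ` I" for q r
      using that expand by (auto simp: P_def)
    show "snd (snd q) = (norm (fst q))\<^sup>2 - (norm (z - fst (snd q)))\<^sup>2" if "q \<in> P ` I" for q
      using that by (auto simp: P_def)
  qed
  then have "\<Psi> y \<le> 0" by (simp add: \<Psi>_def)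
  show ?thesis
  proof (intro exI ballI)
    fix i assume "i \<in> I"
    define d where "d = norm (a i - fst y)"
    have "e * (\<Psi> (P i) + d\<^sup>2 - \<Psi> y) \<le> e\<^sup>2 * d\<^sup>2" if "0 < e" "e \<le> 1" for e
    proof -
      have "P i \<in> K" using \<open>i \<in> I\<close> by (simp add: K_def hull_inc)
      then have "(1 - e) *\<^sub>R y + e *\<^sub>R P i \<in> K"
        using \<open>y \<in> K\<close> that unfolding K_def by (intro convexD[OF convex_convex_hull]) auto
      then have "\<Psi> ((1 - e) *\<^sub>R y + e *\<^sub>R P i) \<le> \<Psi> y" by (rule y_max)
      then show ?thesis
        by (simp add: \<Psi>_def d_def affine_minus_power2_norm_on_segment) (simp add: P_def)
    qed
    then have "\<Psi> (P i) + d\<^sup>2 - \<Psi> y \<le> 0" by (rule le_zero_if_le_quadratic)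
    moreover have "\<Psi> (P i) = - (norm (z - b i))\<^sup>2" by (simp add: \<Psi>_def P_def)
    ultimately have "d\<^sup>2 \<le> (norm (z - b i))\<^sup>2" using \<open>\<Psi> y \<le> 0\<close> by linarith
    then show "norm (fst y - a i) \<le> norm (z - b i)"
      unfolding d_def by (simp add: norm_minus_commute)
  qed
qed

lemma power2_norm_diff_le_in_convex:
  fixes p q :: "'a::real_inner"
  assumes "convex S" and "p \<in> S" and "q \<in> S" and lower: "\<And>x. x \<in> S \<Longrightarrow> \<mu> \<le> (norm x)\<^sup>2"
  shows "(norm (p - q))\<^sup>2 \<le> 2 * (norm p)\<^sup>2 + 2 * (norm q)\<^sup>2 - 4 * \<mu>"
proof -
  have "(1/2) *\<^sub>R p + (1/2) *\<^sub>R q \<in> S" using assms by (intro convexD) auto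
  then have "\<mu> \<le> (norm ((1/2) *\<^sub>R (p + q)))\<^sup>2" using lower by (simp add: scaleR_add_right)
  also have "\<dots> = (norm (p + q))\<^sup>2 / 4" by (simp add: power2_eq_square)
  finally have "\<mu> \<le> (norm (p + q))\<^sup>2 / 4" .
  moreover have "(norm (p - q))\<^sup>2 + (norm (p + q))\<^sup>2 = 2 * (norm p)\<^sup>2 + 2 * (norm q)\<^sup>2"
    unfolding power2_norm_eq_inner
    by (simp add: inner_add_left inner_add_right inner_diff_left inner_diff_right inner_commute)
  ultimately show ?thesis by linarith
qed

lemma Cauchy_if_dist_le_tendsto_zero:
  fixes f :: "nat \<Rightarrow> 'a::metric_space"
  assumes dist_le: "\<And>m n. m \<le> n \<Longrightarrow> dist (f m) (f n) \<le> e m" and "e \<longlonglongrightarrow> 0"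
  shows "Cauchy f"
proof (rule metric_CauchyI)
  fix \<epsilon> :: real assume "0 < \<epsilon>"
  then obtain N where N: "\<And>n. N \<le> n \<Longrightarrow> e n < \<epsilon>"
    using order_tendstoD(2)[OF \<open>e \<longlonglongrightarrow> 0\<close>] by (auto simp: eventually_sequentially)
  have "dist (f m) (f n) < \<epsilon>" if "N \<le> m" "N \<le> n" for m n
  proof (cases "m \<le> n")
    case True
    then show ?thesis using dist_le[OF True] N[OF \<open>N \<le> m\<close>] by linarith
  next
    case False
    then show ?thesis using dist_le[of n m] N[OF \<open>N \<le> n\<close>] by (simp add: dist_commute)
  qed
  then show "\<exists>M. \<forall>m\<ge>M. \<forall>n\<ge>M. dist (f m) (f n) < \<epsilon>" by blast
qed

definition inf_sq_norm :: "'a::real_normed_vector set \<Rightarrow> real" where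
  "inf_sq_norm S = (INF x\<in>S. (norm x)\<^sup>2)"

lemma bdd_below_sq_norm: "bdd_below ((\<lambda>x. (norm x)\<^sup>2) ` S)"
  by (rule bdd_belowI[of _ 0]) auto

lemma inf_sq_norm_le: "x \<in> S \<Longrightarrow> inf_sq_norm S \<le> (norm x)\<^sup>2"
  unfolding inf_sq_norm_def using bdd_below_sq_norm by (rule cINF_lower)

lemma inf_sq_norm_antimono:
  assumes "T \<noteq> {}" and "T \<subseteq> S"
  shows "inf_sq_norm S \<le> inf_sq_norm T"
  unfolding inf_sq_norm_def using assms by (intro cINF_superset_mono bdd_below_sq_norm) auto

lemma inf_sq_norm_approx:
  assumes "S \<noteq> {}" and "0 < \<epsilon>"
  obtains x where "x \<in> S" and "(norm x)\<^sup>2 < inf_sq_norm S + \<epsilon>"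
  using cINF_less_iff[OF assms(1) bdd_below_sq_norm, of "inf_sq_norm S + \<epsilon>"] assms(2)
  unfolding inf_sq_norm_def by auto

lemma bdd_above_inf_sq_norm:
  assumes "bounded B" and nonempty_sub: "\<And>i. i \<in> I \<Longrightarrow> S i \<noteq> {} \<and> S i \<subseteq> B"
  shows "bdd_above ((\<lambda>i. inf_sq_norm (S i)) ` I)"
proof -
  obtain R where R: "\<And>x. x \<in> B \<Longrightarrow> norm x \<le> R" using \<open>bounded B\<close> by (auto simp: bounded_iff)
  have "inf_sq_norm (S i) \<le> R\<^sup>2" if "i \<in> I" for i
  proof -
    obtain x where "x \<in> S i" using nonempty_sub[OF \<open>i \<in> I\<close>] by blast
    then have "(norm x)\<^sup>2 \<le> R\<^sup>2" using R nonempty_sub[OF \<open>i \<in> I\<close>] by (intro power_mono) auto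
    with inf_sq_norm_le[OF \<open>x \<in> S i\<close>] show ?thesis by linarith
  qed
  then show ?thesis by (intro bdd_aboveI) auto
qed

lemma nested_convex_near_min_norm_converge:
  fixes S :: "nat \<Rightarrow> 'a::{real_inner,complete_space} set"
  assumes "decseq S" and convex: "\<And>n. convex (S n)"
    and lower: "\<And>n x. x \<in> S n \<Longrightarrow> M - \<delta> n \<le> (norm x)\<^sup>2"
    and "decseq \<delta>" and "\<delta> \<longlonglongrightarrow> 0"
  shows "\<exists>l. \<forall>q. (\<forall>n. q n \<in> S n \<and> (norm (q n))\<^sup>2 \<le> M + \<delta> n) \<longrightarrow> q \<longlonglongrightarrow> l"
proof -
  define near where "near n t \<longleftrightarrow> t \<in> S n \<and> (norm t)\<^sup>2 \<le> M + \<delta> n" for n t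
  have near_dist: "dist s t \<le> sqrt (8 * \<delta> n)" if "near n s" "near n t" for n s t
  proof -
    have "(norm (s - t))\<^sup>2 \<le> 2 * (norm s)\<^sup>2 + 2 * (norm t)\<^sup>2 - 4 * (M - \<delta> n)"
      using that lower unfolding near_def by (intro power2_norm_diff_le_in_convex[OF convex]) auto
    moreover have "(norm s)\<^sup>2 \<le> M + \<delta> n" "(norm t)\<^sup>2 \<le> M + \<delta> n"
      using that by (simp_all add: near_def)
    ultimately have "(norm (s - t))\<^sup>2 \<le> 8 * \<delta> n" by (simp add: algebra_simps)
    then show ?thesis by (simp add: dist_norm real_le_rsqrt)
  qed
  have near_anti: "near n t" if "near k t" "n \<le> k" for n k t
  proof -
    have "S k \<subseteq> S n" "\<delta> k \<le> \<delta> n"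
      using decseqD[OF \<open>decseq S\<close> \<open>n \<le> k\<close>] decseqD[OF \<open>decseq \<delta>\<close> \<open>n \<le> k\<close>] by auto
    then show ?thesis using \<open>near k t\<close> by (auto simp: near_def)
  qed
  have bound_lim: "(\<lambda>n. sqrt (8 * \<delta> n)) \<longlonglongrightarrow> 0"
    using tendsto_real_sqrt[OF tendsto_mult_right_zero[OF \<open>\<delta> \<longlonglongrightarrow> 0\<close>, of 8]] by simp
  show ?thesis
  proof (cases "\<exists>p. \<forall>n. near n (p n)")
    case False
    then show ?thesis unfolding near_def by blast
  next
    case True
    then obtain p where p: "\<And>n. near n (p n)" by blast
    have "dist (p n) (p k) \<le> sqrt (8 * \<delta> n)" if "n \<le> k" for n k
      using near_dist[OF p near_anti[OF p that]] .
    then have "Cauchy p" using bound_lim by (rule Cauchy_if_dist_le_tendsto_zero)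
    then obtain l where l: "p \<longlonglongrightarrow> l" using Cauchy_convergent convergent_def by blast
    have "q \<longlonglongrightarrow> l" if "\<forall>n. near n (q n)" for q
    proof -
      have "(\<lambda>n. dist (q n) (p n)) \<longlonglongrightarrow> 0"
      proof (rule tendsto_sandwich[OF _ _ tendsto_const bound_lim])
        show "\<forall>\<^sub>F n in sequentially. 0 \<le> dist (q n) (p n)" by simp
        show "\<forall>\<^sub>F n in sequentially. dist (q n) (p n) \<le> sqrt (8 * \<delta> n)"
          using near_dist p that by simp
      qed
      then have "(\<lambda>n. q n - p n) \<longlonglongrightarrow> 0" by (simp add: dist_norm tendsto_norm_zero_iff)
      with l show "q \<longlonglongrightarrow> l" by (rule Lim_transform)
    qed
    then show ?thesis unfolding near_def by blast
  qed
qed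

lemma incseq_finite_subsets_approx_SUP:
  fixes f :: "'a set \<Rightarrow> real"
  assumes mono: "\<And>\<G> \<H>. \<G> \<subseteq> \<H> \<Longrightarrow> finite \<H> \<Longrightarrow> \<H> \<subseteq> X \<Longrightarrow> f \<G> \<le> f \<H>"
    and bdd: "bdd_above (f ` {\<G>. finite \<G> \<and> \<G> \<subseteq> X})" and pos: "\<And>n. 0 < \<epsilon> n"
  obtains F where "incseq F" and "\<And>n. finite (F n)" and "\<And>n. F n \<subseteq> X"
    and "\<And>n. (SUP \<G>\<in>{\<G>. finite \<G> \<and> \<G> \<subseteq> X}. f \<G>) - \<epsilon> n < f (F n)"
proof -
  define M where "M = (SUP \<G>\<in>{\<G>. finite \<G> \<and> \<G> \<subseteq> X}. f \<G>)"
  have "\<exists>\<G>\<in>{\<G>. finite \<G> \<and> \<G> \<subseteq> X}. M - \<epsilon> n < f \<G>" for n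
    using less_cSUP_iff[OF _ bdd, of "M - \<epsilon> n"] pos[of n] by (auto simp: M_def)
  then have "\<forall>n. \<exists>\<G>. (finite \<G> \<and> \<G> \<subseteq> X) \<and> M - \<epsilon> n < f \<G>" by blast
  then obtain G where G: "\<forall>n. (finite (G n) \<and> G n \<subseteq> X) \<and> M - \<epsilon> n < f (G n)"
    by (rule choice[THEN exE])
  define F where "F n = (\<Union>k\<le>n. G k)" for n
  have F: "finite (F n) \<and> F n \<subseteq> X" for n using G by (auto simp: F_def)
  show ?thesis
  proof (rule that[folded M_def])
    show "incseq F" by (intro incseq_SucI) (auto simp: F_def atMost_Suc)
    show "finite (F n)" "F n \<subseteq> X" for n using F by simp_all
    show "M - \<epsilon> n < f (F n)" for n
    proof -
      have "f (G n) \<le> f (F n)" using F by (intro mono) (auto simp: F_def)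
      moreover have "M - \<epsilon> n < f (G n)" using G by blast
      ultimately show ?thesis by linarith
    qed
  qed
qed

(* This replaces weak compactness: the finite subintersections whose minimal squared norm is
   within delta n of the supremum M of all such minima can be taken nested, and their nearly
   minimal points converge to a point lying in every member of the family. *)
lemma Inter_closed_convex_nonempty:
  fixes \<F> :: "'a::{real_inner,complete_space} set set"
  assumes closed: "\<And>K. K \<in> \<F> \<Longrightarrow> closed K" and convex: "\<And>K. K \<in> \<F> \<Longrightarrow> convex K"
    and "K\<^sub>0 \<in> \<F>" and "bounded K\<^sub>0"
    and finite_inter: "\<And>\<G>. finite \<G> \<Longrightarrow> \<G> \<subseteq> \<F> \<Longrightarrow> \<Inter>\<G> \<noteq> {}"
  shows "\<Inter>\<F> \<noteq> {}"
proof -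
  define S where "S \<G> = \<Inter>(insert K\<^sub>0 \<G>)" for \<G>
  define M where "M = (SUP \<G>\<in>{\<G>. finite \<G> \<and> \<G> \<subseteq> \<F>}. inf_sq_norm (S \<G>))"
  define \<delta> where "\<delta> n = 1 / real (Suc n)" for n
  have S_ne: "S \<G> \<noteq> {}" if "finite \<G>" "\<G> \<subseteq> \<F>" for \<G>
    using finite_inter[of "insert K\<^sub>0 \<G>"] that \<open>K\<^sub>0 \<in> \<F>\<close> by (auto simp: S_def)
  have S_anti: "S \<H> \<subseteq> S \<G>" if "\<G> \<subseteq> \<H>" for \<G> \<H>
    using that by (auto simp: S_def)
  have bdd: "bdd_above ((\<lambda>\<G>. inf_sq_norm (S \<G>)) ` {\<G>. finite \<G> \<and> \<G> \<subseteq> \<F>})"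
    by (rule bdd_above_inf_sq_norm[OF \<open>bounded K\<^sub>0\<close>]) (use S_ne in \<open>auto simp: S_def\<close>)
  have mono: "inf_sq_norm (S \<G>) \<le> inf_sq_norm (S \<H>)" if "\<G> \<subseteq> \<H>" "finite \<H>" "\<H> \<subseteq> \<F>" for \<G> \<H>
    using S_ne[OF that(2,3)] S_anti[OF that(1)] by (rule inf_sq_norm_antimono)
  have "0 < \<delta> n" for n by (simp add: \<delta>_def)
  obtain F where "incseq F" and F: "\<And>n. finite (F n)" "\<And>n. F n \<subseteq> \<F>"
    and F_M: "\<And>n. M - \<delta> n < inf_sq_norm (S (F n))"
    unfolding M_def
    by (rule incseq_finite_subsets_approx_SUP[where \<epsilon> = \<delta>, OF mono bdd]) (auto simp: \<delta>_def)
  have "decseq (\<lambda>n. S (F n))" unfolding decseq_def using S_anti incseqD[OF \<open>incseq F\<close>] by blast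
  moreover have "convex (S (F n))" for n
    using F convex \<open>K\<^sub>0 \<in> \<F>\<close> unfolding S_def by (intro convex_Inter) auto
  moreover have "M - \<delta> n \<le> (norm x)\<^sup>2" if "x \<in> S (F n)" for n x
    using F_M[of n] inf_sq_norm_le[OF that] by linarith
  moreover have "decseq \<delta>" unfolding \<delta>_def by (intro decseq_SucI) (simp add: frac_le)
  moreover have "\<delta> \<longlonglongrightarrow> 0" unfolding \<delta>_def by (rule LIMSEQ_inverse_real_of_nat[unfolded inverse_eq_divide])
  ultimately have "\<exists>l. \<forall>q. (\<forall>n. q n \<in> S (F n) \<and> (norm (q n))\<^sup>2 \<le> M + \<delta> n) \<longrightarrow> q \<longlonglongrightarrow> l"
    by (rule nested_convex_near_min_norm_converge)
  then obtain l where l: "\<And>q. \<forall>n. q n \<in> S (F n) \<and> (norm (q n))\<^sup>2 \<le> M + \<delta> n \<Longrightarrow> q \<longlonglongrightarrow> l"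
    by blast
  have "l \<in> K" if "K \<in> \<F>" for K
  proof -
    have "\<exists>t. t \<in> S (insert K (F n)) \<and> (norm t)\<^sup>2 \<le> M + \<delta> n" for n
    proof -
      have fin: "finite (insert K (F n))" "insert K (F n) \<subseteq> \<F>" using F that by auto
      obtain t where "t \<in> S (insert K (F n))"
        and "(norm t)\<^sup>2 < inf_sq_norm (S (insert K (F n))) + \<delta> n"
        using inf_sq_norm_approx[OF S_ne[OF fin] \<open>0 < \<delta> n\<close>] .
      moreover have "inf_sq_norm (S (insert K (F n))) \<le> M"
        unfolding M_def using fin bdd by (intro cSUP_upper) auto
      ultimately show ?thesis by (intro exI[of _ t]) simp
    qed
    then have "\<forall>n. \<exists>t. t \<in> S (insert K (F n)) \<and> (norm t)\<^sup>2 \<le> M + \<delta> n" by blast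
    then obtain q where q: "\<forall>n. q n \<in> S (insert K (F n)) \<and> (norm (q n))\<^sup>2 \<le> M + \<delta> n"
      by (rule choice[THEN exE])
    have "q n \<in> K" for n using q by (simp add: S_def)
    moreover have "q \<longlonglongrightarrow> l" using q S_anti[OF subset_insertI] by (intro l) blast
    ultimately show "l \<in> K" by (rule closed_sequentially[OF closed[OF that]])
  qed
  then have "l \<in> \<Inter>\<F>" by (rule InterI)
  then show ?thesis by blast
qed

lemma nonexpansive_extension:
  fixes a b :: "'i \<Rightarrow> 'a::{real_inner,complete_space}"
  assumes expand: "\<And>i j. i \<in> I \<Longrightarrow> j \<in> I \<Longrightarrow> norm (a i - a j) \<le> norm (b i - b j)"
  shows "\<exists>t. \<forall>i\<in>I. norm (t - a i) \<le> norm (z - b i)"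
proof (cases "I = {}")
  case True
  then show ?thesis by simp
next
  case False
  then obtain i\<^sub>0 where "i\<^sub>0 \<in> I" by blast
  define B where "B i = cball (a i) (norm (z - b i))" for i
  have "\<Inter>(B ` I) \<noteq> {}"
  proof (rule Inter_closed_convex_nonempty)
    show "closed K" if "K \<in> B ` I" for K using that by (auto simp: B_def)
    show "convex K" if "K \<in> B ` I" for K using that by (auto simp: B_def)
    show "B i\<^sub>0 \<in> B ` I" "bounded (B i\<^sub>0)" using \<open>i\<^sub>0 \<in> I\<close> by (auto simp: B_def)
    show "\<Inter>\<G> \<noteq> {}" if \<G>: "finite \<G>" "\<G> \<subseteq> B ` I" for \<G>
    proof -
      obtain J where "J \<subseteq> I" "finite J" "\<G> = B ` J"
        using finite_subset_image[OF \<G>] by blast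
      moreover obtain t where "\<forall>j\<in>J. norm (t - a j) \<le> norm (z - b j)"
        using nonexpansive_extension_finite[OF \<open>finite J\<close>] \<open>J \<subseteq> I\<close> expand by (metis subsetD)
      ultimately have "t \<in> \<Inter>\<G>" by (auto simp: B_def dist_norm norm_minus_commute)
      then show ?thesis by blast
    qed
  qed
  then obtain t where "t \<in> \<Inter>(B ` I)" by blast
  then show ?thesis by (auto simp: B_def dist_norm norm_minus_commute)
qed

section \<open>Minty's theorem\<close>

lemma norm_diff_le_norm_add_iff:
  fixes c d :: "'a::real_inner"
  shows "norm (c - d) \<le> norm (c + d) \<longleftrightarrow> 0 \<le> inner c d"
proof -
  have "(norm (c - d))\<^sup>2 = (norm (c + d))\<^sup>2 - 4 * inner c d"
    unfolding power2_norm_eq_inner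
    by (simp add: inner_add_left inner_add_right inner_diff_left inner_diff_right inner_commute)
  then show ?thesis by (smt (verit) norm_ge_zero power_mono power2_le_imp_le)
qed

lemma maximally_monotone_memI:
  assumes "maximally_monotone A"
    and monotone_with: "\<And>x u. u \<in> A x \<Longrightarrow> 0 \<le> inner (p - x) (w - u)"
  shows "w \<in> A p"
proof -
  define B where "B x = (if x = p then insert w (A x) else A x)" for x
  have "monotone_op B"
    unfolding monotone_op_def
  proof (intro allI impI)
    fix x y u v assume "u \<in> B x" "v \<in> B y"
    then consider "u \<in> A x" "v \<in> A y" | "x = p" "u = w" "v \<in> A y"
      | "u \<in> A x" "y = p" "v = w" | "x = p" "u = w" "y = p" "v = w"
      by (auto simp: B_def split: if_splits)
    then show "0 \<le> inner (x - y) (u - v)"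
    proof cases
      case 1
      then show ?thesis using assms(1) by (auto simp: maximally_monotone_def monotone_op_def)
    next
      case 2
      then show ?thesis using monotone_with by simp
    next
      case 3
      have "inner (x - y) (u - v) = inner (p - x) (w - u)"
        using 3 by (simp add: inner_diff_left inner_diff_right)
      then show ?thesis using monotone_with[OF \<open>u \<in> A x\<close>] by simp
    next
      case 4
      then show ?thesis by simp
    qed
  qed
  moreover have "\<forall>x. A x \<subseteq> B x" by (simp add: B_def subset_insertI)
  ultimately have "B = A" using assms(1) by (simp add: maximally_monotone_def)
  then show ?thesis by (metis B_def insertI1)
qed

lemma monotone_op_norm_diff_le:
  assumes "monotone_op A" and "0 \<le> \<gamma>" and "u \<in> A x" and "v \<in> A y"
  shows "norm ((x - \<gamma> *\<^sub>R u) - (y - \<gamma> *\<^sub>R v)) \<le> norm ((x + \<gamma> *\<^sub>R u) - (y + \<gamma> *\<^sub>R v))"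
proof -
  have "0 \<le> inner (x - y) (u - v)" using assms(1,3,4) by (auto simp: monotone_op_def)
  then have "0 \<le> inner (x - y) (\<gamma> *\<^sub>R (u - v))" using \<open>0 \<le> \<gamma>\<close> by simp
  then show ?thesis
    using norm_diff_le_norm_add_iff[of "x - y" "\<gamma> *\<^sub>R (u - v)"] by (simp add: algebra_simps)
qed

lemma minty_surjective:
  fixes A :: "'a::{real_inner,complete_space} \<Rightarrow> 'a set"
  assumes "maximally_monotone A" and "\<gamma> > 0"
  shows "\<exists>p. \<exists>u\<in>A p. z = p + \<gamma> *\<^sub>R u"
proof -
  define I where "I = {(x, u). u \<in> A x}"
  obtain t where t: "\<forall>(x, u)\<in>I. norm (t - (x - \<gamma> *\<^sub>R u)) \<le> norm (z - (x + \<gamma> *\<^sub>R u))"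
    using nonexpansive_extension[of I "\<lambda>(x, u). x - \<gamma> *\<^sub>R u" "\<lambda>(x, u). x + \<gamma> *\<^sub>R u" z]
      monotone_op_norm_diff_le[of A \<gamma>] assms
    by (fastforce simp: I_def maximally_monotone_def)
  define p where "p = (1/2) *\<^sub>R (z + t)"
  define w where "w = (1/2) *\<^sub>R (z - t)"
  have z_eq: "z = p + w" and t_eq: "t = p - w"
    unfolding p_def w_def by (simp_all add: algebra_simps flip: scaleR_add_left)
  have "(1 / \<gamma>) *\<^sub>R w \<in> A p"
  proof (rule maximally_monotone_memI[OF assms(1)])
    fix x u assume "u \<in> A x"
    then have "norm (t - (x - \<gamma> *\<^sub>R u)) \<le> norm (z - (x + \<gamma> *\<^sub>R u))"
      using t by (auto simp: I_def)
    moreover have "t - (x - \<gamma> *\<^sub>R u) = (p - x) - (w - \<gamma> *\<^sub>R u)"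
      and "z - (x + \<gamma> *\<^sub>R u) = (p - x) + (w - \<gamma> *\<^sub>R u)"
      by (simp_all add: z_eq t_eq algebra_simps)
    ultimately have "norm ((p - x) - (w - \<gamma> *\<^sub>R u)) \<le> norm ((p - x) + (w - \<gamma> *\<^sub>R u))"
      by simp
    then have "0 \<le> inner (p - x) (w - \<gamma> *\<^sub>R u)" by (simp add: norm_diff_le_norm_add_iff)
    moreover have "(1 / \<gamma>) *\<^sub>R w - u = (1 / \<gamma>) *\<^sub>R (w - \<gamma> *\<^sub>R u)" using \<open>\<gamma> > 0\<close> by (simp add: algebra_simps)
    ultimately show "0 \<le> inner (p - x) ((1 / \<gamma>) *\<^sub>R w - u)" using \<open>\<gamma> > 0\<close> by simp
  qed
  moreover have "z = p + \<gamma> *\<^sub>R ((1 / \<gamma>) *\<^sub>R w)"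
    using \<open>\<gamma> > 0\<close> by (simp add: z_eq)
  ultimately show ?thesis by blast
qed

section \<open>The resolvent\<close>

lemma resolvent_eqI:
  assumes "monotone_op A" and "\<gamma> > 0" and "u \<in> A p" and "z = p + \<gamma> *\<^sub>R u"
  shows "resolvent \<gamma> A z = p"
  unfolding resolvent_def
proof (rule the_equality)
  show "\<exists>u\<in>A p. z = p + \<gamma> *\<^sub>R u" using assms(3,4) by blast
next
  fix q assume "\<exists>v\<in>A q. z = q + \<gamma> *\<^sub>R v"
  then obtain v where "v \<in> A q" and "z = q + \<gamma> *\<^sub>R v" by blast
  then have q_eq: "q - p = \<gamma> *\<^sub>R (u - v)" using assms(4) by (simp add: algebra_simps)
  have "0 \<le> inner (q - p) (v - u)"
    using assms(1) \<open>v \<in> A q\<close> \<open>u \<in> A p\<close> by (auto simp: monotone_op_def)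
  also have "inner (q - p) (v - u) = - \<gamma> * (norm (u - v))\<^sup>2"
    unfolding q_eq power2_norm_eq_inner
    by (simp add: inner_diff_right inner_diff_left inner_commute algebra_simps)
  finally have "u = v" using \<open>\<gamma> > 0\<close> by (simp add: mult_le_0_iff)
  then show "q = p" using q_eq by simp
qed

lemma resolventE:
  fixes A :: "'a::{real_inner,complete_space} \<Rightarrow> 'a set"
  assumes "maximally_monotone A" and "\<gamma> > 0"
  obtains u where "u \<in> A (resolvent \<gamma> A z)" and "z = resolvent \<gamma> A z + \<gamma> *\<^sub>R u"
proof -
  obtain p u where "u \<in> A p" "z = p + \<gamma> *\<^sub>R u" using minty_surjective[OF assms] by blast
  moreover have "resolvent \<gamma> A z = p"
    using assms calculation by (intro resolvent_eqI) (auto simp: maximally_monotone_def)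
  ultimately show ?thesis by (intro that[of u]) simp_all
qed

lemma power2_norm_add_scaleR:
  fixes x y :: "'a::real_inner"
  shows "(norm (x + c *\<^sub>R y))\<^sup>2 = (norm x)\<^sup>2 + 2 * c * inner x y + c\<^sup>2 * (norm y)\<^sup>2"
  unfolding power2_norm_eq_inner
  by (simp add: inner_add_left inner_add_right inner_commute power2_eq_square algebra_simps)

lemma uniformly_firmly_nonexpansive_onI:
  fixes T :: "'a::real_inner \<Rightarrow> 'a"
  assumes "T ` C \<subseteq> C"
    and inner_ge: "\<And>x y. x \<in> C \<Longrightarrow> y \<in> C \<Longrightarrow>
      \<psi> (norm (T x - T y)) \<le> inner (T x - T y) ((x - y) - (T x - T y))"
  shows "uniformly_firmly_nonexpansive_on C \<psi> T"
  unfolding uniformly_firmly_nonexpansive_on_def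
proof (intro conjI ballI)
  fix x y t assume "x \<in> C" "y \<in> C" "t \<in> {0..1::real}"
  define d where "d = T x - T y"
  define e where "e = (x - y) - d"
  have combination: "(1 - t) *\<^sub>R x + t *\<^sub>R T x - ((1 - t) *\<^sub>R y + t *\<^sub>R T y) = d + (1 - t) *\<^sub>R e"
    by (simp add: d_def e_def algebra_simps)
  have "(1 - t) * \<psi> (norm d) \<le> (1 - t) * inner d e"
    using inner_ge[OF \<open>x \<in> C\<close> \<open>y \<in> C\<close>] \<open>t \<in> {0..1}\<close>
    by (intro mult_left_mono) (auto simp: d_def e_def)
  moreover have "0 \<le> (1 - t)\<^sup>2 * (norm e)\<^sup>2" by simp
  ultimately show "(norm (T x - T y))\<^sup>2 \<le> (norm ((1 - t) *\<^sub>R x + t *\<^sub>R T x - ((1 - t) *\<^sub>R y + t *\<^sub>R T y)))\<^sup>2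
      - 2 * (1 - t) * \<psi> (norm (T x - T y))"
    unfolding combination d_def[symmetric] power2_norm_add_scaleR by linarith
qed (use assms(1) in simp)

lemma resolvent_inner_ge_uniformly_monotone:
  fixes A :: "'a::{real_inner,complete_space} \<Rightarrow> 'a set"
  assumes "maximally_monotone A" and "uniformly_monotone_on C \<phi> A" and "\<gamma> > 0"
    and "resolvent \<gamma> A x \<in> C" and "resolvent \<gamma> A y \<in> C"
  defines "J \<equiv> resolvent \<gamma> A"
  shows "\<gamma> * \<phi> (norm (J x - J y)) \<le> inner (J x - J y) ((x - y) - (J x - J y))"
proof -
  obtain u where "u \<in> A (J x)" and x_eq: "x = J x + \<gamma> *\<^sub>R u"
    using resolventE[OF assms(1,3)] unfolding J_def by blast
  obtain v where "v \<in> A (J y)" and y_eq: "y = J y + \<gamma> *\<^sub>R v"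
    using resolventE[OF assms(1,3)] unfolding J_def by blast
  have "(x - y) - (J x - J y) = \<gamma> *\<^sub>R (u - v)"
    by (subst x_eq, subst y_eq) (simp add: algebra_simps)
  moreover have "\<phi> (norm (J x - J y)) \<le> inner (J x - J y) (u - v)"
    using assms(2,4,5) \<open>u \<in> A (J x)\<close> \<open>v \<in> A (J y)\<close> unfolding J_def uniformly_monotone_on_def by blast
  ultimately show ?thesis using \<open>\<gamma> > 0\<close> by simp
qed

theorem proposition4p8:
  fixes A :: "'a::{real_inner, complete_space} \<Rightarrow> 'a set"
    and C :: "'a set" and \<phi> :: "real \<Rightarrow> real" and \<gamma> :: real
  assumes "C \<noteq> {}"
    and "mono_on {0..} \<phi>"
    and "\<forall>t\<ge>0. \<phi> t \<ge> 0"
    and "\<forall>t\<ge>0. \<phi> t = 0 \<longleftrightarrow> t = 0"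
    and "maximally_monotone A"
    and "uniformly_monotone_on C \<phi> A"
    and "\<gamma> > 0"
    and "resolvent \<gamma> A ` C \<subseteq> C"
  shows "uniformly_firmly_nonexpansive_on C (\<lambda>t. \<gamma> * \<phi> t) (resolvent \<gamma> A)"
proof (rule uniformly_firmly_nonexpansive_onI[OF assms(8)])
  fix x y assume "x \<in> C" "y \<in> C"
  then have "resolvent \<gamma> A x \<in> C" "resolvent \<gamma> A y \<in> C" using assms(8) by auto
  then show "\<gamma> * \<phi> (norm (resolvent \<gamma> A x - resolvent \<gamma> A y))
      \<le> inner (resolvent \<gamma> A x - resolvent \<gamma> A y)
          ((x - y) - (resolvent \<gamma> A x - resolvent \<gamma> A y))"
    by (rule resolvent_inner_ge_uniformly_monotone[OF assms(5,6,7)])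
qed

end
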